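(* Let $X$ be a compact Hausdorff space, $\varphi:X\to X$ a homeomorphism, and $y\in X$ periodic. Then for every $F\in C(X)\rtimes_\varphi\mathbb{Z}^+$, $$\|\pi_y(F)\|\ \ge\ \sup_{\lambda\in\mathbb{T}}\|\Pi_{y,\lambda}(F)\|.$$
   Context: Semicrossed product: let $\mathcal{A}_0$ be the algebra generated by $C(X)$ and a symbol $U$ subject to $fU=U(f\circ\varphi)$, with elements $\sum_{n=0}^NU^nf_n$, $f_n\in C(X)$; $C(X)\rtimes_\varphi\mathbb{Z}^+$ is its completion in the norm $\sup_\pi\|\pi(F)\|$ over homomorphisms $\pi$ into $\mathcal{B}(\mathcal{H})$ that are $*$-representations on $C(X)$ with $\pi(U)$ an isometry (these extend to the completion). For $x\in X$ set $x_n=\varphi^{n-1}(x)$ and define $\pi_x$ on $\ell^2(\mathbb{N})$ by $\pi_x(f)(z_1,z_2,\dots)=(f(x_1)z_1,f(x_2)z_2,\dots)$, $\pi_x(U)(z_1,z_2,\dots)=(0,z_1,z_2,\dots)$. For $y$ periodic of period $p$ and $\lambda\in\mathbb{T}$, $\Pi_{y,\lambda}$ is the representation on $\mathbb{C}^p$ with $\Pi_{y,\lambda}(f)(z_1,\dots,z_p)=(f(y_1)z_1,\dots,f(y_p)z_p)$, $y_j=\varphi^{j-1}(y)$, and $\Pi_{y,\lambda}(U)(z_1,\dots,z_p)=\lambda(z_p,z_1,\dots,z_{p-1})$. *)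

theory Defs
  imports "HOL-Analysis.Analysis"
begin

definition l2 :: "('h \<Rightarrow> complex) \<Rightarrow> bool" where
  "l2 z \<longleftrightarrow> (\<lambda>i. (cmod (z i))^2) summable_on UNIV"

definition l2norm :: "('h \<Rightarrow> complex) \<Rightarrow> real" where
  "l2norm z = sqrt (\<Sum>\<^sub>\<infinity>i. (cmod (z i))^2)"

definition l2inner :: "('h \<Rightarrow> complex) \<Rightarrow> ('h \<Rightarrow> complex) \<Rightarrow> complex" where
  "l2inner z w = (\<Sum>\<^sub>\<infinity>i. z i * cnj (w i))"

definition bounded_op :: "(('h \<Rightarrow> complex) \<Rightarrow> ('h \<Rightarrow> complex)) \<Rightarrow> bool" where
  "bounded_op T \<longleftrightarrow>
     (\<forall>z. l2 z \<longrightarrow> l2 (T z)) \<and>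
     (\<forall>z w. l2 z \<longrightarrow> l2 w \<longrightarrow> T (\<lambda>i. z i + w i) = (\<lambda>i. T z i + T w i)) \<and>
     (\<forall>c z. l2 z \<longrightarrow> T (\<lambda>i. c * z i) = (\<lambda>i. c * T z i)) \<and>
     (\<exists>C. \<forall>z. l2 z \<longrightarrow> l2norm (T z) \<le> C * l2norm z)"

definition opnorm :: "(('h \<Rightarrow> complex) \<Rightarrow> ('h \<Rightarrow> complex)) \<Rightarrow> real" where
  "opnorm T = Sup {l2norm (T z) | z. l2 z \<and> l2norm z \<le> 1}"

text \<open>An element sum_n U^n f_n is given by its coefficient sequence (finitely supported).\<close>
definition is_poly :: "(nat \<Rightarrow> 'x::topological_space \<Rightarrow> complex) \<Rightarrow> bool" where
  "is_poly fs \<longleftrightarrow> (\<forall>n. continuous_on UNIV (fs n)) \<and> finite {n. fs n \<noteq> (\<lambda>x. 0)}"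

text \<open>Image of sum_n U^n f_n under the homomorphism determined by rho on C(X) and V = image of U.\<close>
definition rep_poly ::
  "(('x \<Rightarrow> complex) \<Rightarrow> ('h \<Rightarrow> complex) \<Rightarrow> ('h \<Rightarrow> complex)) \<Rightarrow>
   (('h \<Rightarrow> complex) \<Rightarrow> ('h \<Rightarrow> complex)) \<Rightarrow> (nat \<Rightarrow> 'x \<Rightarrow> complex) \<Rightarrow>
   ('h \<Rightarrow> complex) \<Rightarrow> ('h \<Rightarrow> complex)" where
  "rep_poly \<rho> V fs z = (\<lambda>i. \<Sum>n\<in>{n. fs n \<noteq> (\<lambda>x. 0)}. (V ^^ n) (\<rho> (fs n) z) i)"

text \<open>Admissible representations on l2('h): *-representation rho of C(X) (not required unital),
  V an isometry, covariance  rho(f) V = V rho(f o phi)  (from fU = U(f o phi)).\<close>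
definition is_rep :: "('x::topological_space \<Rightarrow> 'x) \<Rightarrow>
   (('x \<Rightarrow> complex) \<Rightarrow> ('h \<Rightarrow> complex) \<Rightarrow> ('h \<Rightarrow> complex)) \<Rightarrow>
   (('h \<Rightarrow> complex) \<Rightarrow> ('h \<Rightarrow> complex)) \<Rightarrow> bool" where
  "is_rep \<phi> \<rho> V \<longleftrightarrow>
    (\<forall>f. continuous_on UNIV f \<longrightarrow> bounded_op (\<rho> f)) \<and>
    (\<forall>f g z. continuous_on UNIV f \<longrightarrow> continuous_on UNIV g \<longrightarrow> l2 z \<longrightarrow>
        \<rho> (\<lambda>x. f x + g x) z = (\<lambda>i. \<rho> f z i + \<rho> g z i)) \<and>
    (\<forall>c f z. continuous_on UNIV f \<longrightarrow> l2 z \<longrightarrow> \<rho> (\<lambda>x. c * f x) z = (\<lambda>i. c * \<rho> f z i)) \<and>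
    (\<forall>f g z. continuous_on UNIV f \<longrightarrow> continuous_on UNIV g \<longrightarrow> l2 z \<longrightarrow>
        \<rho> (\<lambda>x. f x * g x) z = \<rho> f (\<rho> g z)) \<and>
    (\<forall>f z w. continuous_on UNIV f \<longrightarrow> l2 z \<longrightarrow> l2 w \<longrightarrow>
        l2inner (\<rho> f z) w = l2inner z (\<rho> (\<lambda>x. cnj (f x)) w)) \<and>
    bounded_op V \<and> (\<forall>z. l2 z \<longrightarrow> l2norm (V z) = l2norm z) \<and>
    (\<forall>f z. continuous_on UNIV f \<longrightarrow> l2 z \<longrightarrow> \<rho> f (V z) = V (\<rho> (\<lambda>x. f (\<phi> x)) z))"

definition univ_norm :: "'h itself \<Rightarrow> ('x::topological_space \<Rightarrow> 'x) \<Rightarrow> (nat \<Rightarrow> 'x \<Rightarrow> complex) \<Rightarrow> real" where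
  "univ_norm _ \<phi> fs =
     Sup {opnorm (rep_poly \<rho> V fs) | (\<rho> :: ('x \<Rightarrow> complex) \<Rightarrow> ('h \<Rightarrow> complex) \<Rightarrow> ('h \<Rightarrow> complex)) V.
            is_rep \<phi> \<rho> V}"

text \<open>Elements of the completion C(X) x_phi Z^+: Cauchy sequences of polynomials for the universal norm.\<close>
definition in_completion :: "'h itself \<Rightarrow> ('x::topological_space \<Rightarrow> 'x) \<Rightarrow> (nat \<Rightarrow> nat \<Rightarrow> 'x \<Rightarrow> complex) \<Rightarrow> bool" where
  "in_completion H \<phi> P \<longleftrightarrow> (\<forall>k. is_poly (P k)) \<and>
     (\<forall>\<epsilon>>0. \<exists>N. \<forall>k\<ge>N. \<forall>m\<ge>N. univ_norm H \<phi> (\<lambda>n x. P k n x - P m n x) < \<epsilon>)"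

text \<open>Coordinates indexed from 0: coordinate i corresponds to x_{i+1} = phi^i(x).\<close>
definition orbit_mult :: "('x \<Rightarrow> 'x) \<Rightarrow> 'x \<Rightarrow> ('x \<Rightarrow> complex) \<Rightarrow> (nat \<Rightarrow> complex) \<Rightarrow> (nat \<Rightarrow> complex)" where
  "orbit_mult \<phi> x f z = (\<lambda>i. f ((\<phi> ^^ i) x) * z i)"

definition shift :: "(nat \<Rightarrow> complex) \<Rightarrow> (nat \<Rightarrow> complex)" where
  "shift z = (\<lambda>i. if i = 0 then 0 else z (i - 1))"

definition pi_x :: "('x \<Rightarrow> 'x) \<Rightarrow> 'x \<Rightarrow> (nat \<Rightarrow> 'x \<Rightarrow> complex) \<Rightarrow> (nat \<Rightarrow> complex) \<Rightarrow> (nat \<Rightarrow> complex)" where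
  "pi_x \<phi> x fs = rep_poly (orbit_mult \<phi> x) shift fs"

definition periodic_pt :: "('x \<Rightarrow> 'x) \<Rightarrow> 'x \<Rightarrow> bool" where
  "periodic_pt \<phi> y \<longleftrightarrow> (\<exists>p>0. (\<phi> ^^ p) y = y)"

definition period :: "('x \<Rightarrow> 'x) \<Rightarrow> 'x \<Rightarrow> nat" where
  "period \<phi> y = (LEAST p. p > 0 \<and> (\<phi> ^^ p) y = y)"

text \<open>Vectors of C^p are represented by functions nat => complex, only coordinates < p matter.\<close>
definition cyc :: "nat \<Rightarrow> complex \<Rightarrow> (nat \<Rightarrow> complex) \<Rightarrow> (nat \<Rightarrow> complex)" where
  "cyc p l z = (\<lambda>i. l * z ((i + p - 1) mod p))"

definition Pi_yl :: "('x \<Rightarrow> 'x) \<Rightarrow> 'x \<Rightarrow> complex \<Rightarrow> (nat \<Rightarrow> 'x \<Rightarrow> complex) \<Rightarrow> (nat \<Rightarrow> complex) \<Rightarrow> (nat \<Rightarrow> complex)" where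
  "Pi_yl \<phi> y l fs = rep_poly (orbit_mult \<phi> y) (cyc (period \<phi> y) l) fs"

definition vnorm :: "nat \<Rightarrow> (nat \<Rightarrow> complex) \<Rightarrow> real" where
  "vnorm p z = sqrt (\<Sum>i<p. (cmod (z i))^2)"

definition matnorm :: "nat \<Rightarrow> ((nat \<Rightarrow> complex) \<Rightarrow> (nat \<Rightarrow> complex)) \<Rightarrow> real" where
  "matnorm p T = Sup {vnorm p (T z) | z. vnorm p z \<le> 1}"

text \<open>Norm of the (continuous) extension to the completion of a norm-type functional N.\<close>
definition ext_norm :: "((nat \<Rightarrow> 'x \<Rightarrow> complex) \<Rightarrow> real) \<Rightarrow> (nat \<Rightarrow> nat \<Rightarrow> 'x \<Rightarrow> complex) \<Rightarrow> real" where
  "ext_norm N P = lim (\<lambda>k. N (P k))"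

end

theory Submission
  imports Defs
begin

text \<open>
  Let p be the period of y, let F = \<Sum> U^n f_n be a polynomial of degree < N, and let u \<in> \<complex>^p.
  The vector w \<in> l2(\<nat>) that repeats u over K periods, twisted by the character
  j \<mapsto> conj(\<lambda>)^j (see twisted_repeat), satisfies
  (\<pi>_y(F) w)_j = conj(\<lambda>)^j (\<Pi>_{y,\<lambda>}(F) u)_{j mod p} for N \<le> j < Kp, because the orbit of y
  is p-periodic. Hence (K - N) |\<Pi>_{y,\<lambda>}(F) u|^2 \<le> K |\<pi>_y(F)|^2 |u|^2, and letting K \<rightarrow> \<infinity>
  gives |\<Pi>_{y,\<lambda>}(F)| \<le> |\<pi>_y(F)| for polynomials.

  To pass to the completion, both norms are dominated by the universal norm: \<pi>_y is an
  admissible representation, which can be moved into l2(H) along an injection \<nat> \<rightarrow> H,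
  and the universal norm is finite because |\<rho>(f)| \<le> sup |f| for every *-representation \<rho>
  of C(X). So along a Cauchy sequence of polynomials both norm sequences converge and the
  inequality survives in the limit.
\<close>

section \<open>The sequence space l2\<close>

lemma l2_zero [simp]: "l2 (\<lambda>i. 0)"
  by (simp add: l2_def)

lemma l2_add:
  assumes "l2 z" "l2 w"
  shows "l2 (\<lambda>i. z i + w i)"
proof -
  have bound: "(cmod (z i + w i))^2 \<le> 2 * (cmod (z i))^2 + 2 * (cmod (w i))^2" for i
  proof -
    have "(cmod (z i + w i))^2 \<le> (cmod (z i) + cmod (w i))^2"
      by (intro power_mono norm_triangle_ineq) auto
    also have "\<dots> \<le> 2 * (cmod (z i))^2 + 2 * (cmod (w i))^2"
      by (smt (verit) sum_squares_bound zero_le_power2 power2_sum)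
    finally show ?thesis .
  qed
  have "(\<lambda>i. 2 * (cmod (z i))^2 + 2 * (cmod (w i))^2) summable_on UNIV"
    using assms unfolding l2_def by (intro summable_on_add summable_on_cmult_right)
  then show ?thesis
    unfolding l2_def by (rule summable_on_comparison_test) (use bound in auto)
qed

lemma l2_scale:
  assumes "l2 z"
  shows "l2 (\<lambda>i. c * z i)"
  using assms unfolding l2_def
  by (simp add: norm_mult power_mult_distrib summable_on_cmult_right)

lemma l2norm_nonneg [simp]: "0 \<le> l2norm z"
  by (simp add: l2norm_def infsum_nonneg)

lemma l2norm_power2: "(l2norm z)^2 = (\<Sum>\<^sub>\<infinity>i. (cmod (z i))^2)"
  by (simp add: l2norm_def infsum_nonneg)

lemma sum_le_l2norm_power2:
  assumes "l2 z" "finite F"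
  shows "(\<Sum>i\<in>F. (cmod (z i))^2) \<le> (l2norm z)^2"
  using assms unfolding l2norm_power2 l2_def
  by (intro finite_sum_le_infsum) auto

lemma l2norm_le_of_finite_sums:
  assumes "l2 z" "0 \<le> B" "\<And>F. finite F \<Longrightarrow> (\<Sum>i\<in>F. (cmod (z i))^2) \<le> B^2"
  shows "l2norm z \<le> B"
proof -
  have "(\<Sum>\<^sub>\<infinity>i. (cmod (z i))^2) \<le> B^2"
    using assms unfolding l2_def by (intro infsum_le_finite_sums) auto
  then show ?thesis
    unfolding l2norm_def using assms(2) real_le_lsqrt by blast
qed

lemma l2norm_eq_0D:
  assumes "l2 z" "l2norm z = 0"
  shows "z i = 0"
  using sum_le_l2norm_power2[OF assms(1), of "{i}"] assms(2) by simp

lemma l2norm_triangle: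
  assumes "l2 z" "l2 w"
  shows "l2norm (\<lambda>i. z i + w i) \<le> l2norm z + l2norm w"
proof (rule l2norm_le_of_finite_sums[OF l2_add[OF assms]])
  fix F :: "'a set" assume F: "finite F"
  have L2_le: "L2_set (\<lambda>i. cmod (v i)) F \<le> l2norm v" if "l2 v" for v :: "'a \<Rightarrow> complex"
    unfolding L2_set_def using sum_le_l2norm_power2[OF that F]
    by (metis l2norm_nonneg real_le_lsqrt sum_nonneg zero_le_power2)
  have "L2_set (\<lambda>i. cmod (z i + w i)) F \<le> L2_set (\<lambda>i. cmod (z i) + cmod (w i)) F"
    by (intro L2_set_mono norm_triangle_ineq) auto
  also have "\<dots> \<le> L2_set (\<lambda>i. cmod (z i)) F + L2_set (\<lambda>i. cmod (w i)) F"
    by (rule L2_set_triangle_ineq)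
  also have "\<dots> \<le> l2norm z + l2norm w"
    using L2_le assms by (intro add_mono) auto
  finally show "(\<Sum>i\<in>F. (cmod (z i + w i))^2) \<le> (l2norm z + l2norm w)^2"
    unfolding L2_set_def by (rule sqrt_le_D)
qed simp

lemma l2norm_scale: "l2norm (\<lambda>i. c * z i) = cmod c * l2norm z"
proof -
  have "(\<Sum>\<^sub>\<infinity>i. (cmod (c * z i))^2) = (cmod c)^2 * (\<Sum>\<^sub>\<infinity>i. (cmod (z i))^2)"
    by (simp add: norm_mult power_mult_distrib infsum_cmult_right')
  then show ?thesis unfolding l2norm_def by (simp add: real_sqrt_mult)
qed

lemma l2_finite_support:
  assumes "finite S" "\<And>i. i \<notin> S \<Longrightarrow> z i = 0"
  shows "l2 z" and "l2norm z = sqrt (\<Sum>i\<in>S. (cmod (z i))^2)"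
proof -
  show "l2 z" unfolding l2_def
    by (subst summable_on_cong_neutral[of S UNIV]) (use assms in auto)
  have "(\<Sum>\<^sub>\<infinity>i. (cmod (z i))^2) = (\<Sum>\<^sub>\<infinity>i\<in>S. (cmod (z i))^2)"
    by (rule infsum_cong_neutral) (use assms in auto)
  then show "l2norm z = sqrt (\<Sum>i\<in>S. (cmod (z i))^2)"
    unfolding l2norm_def using assms by simp
qed

lemma l2_sum:
  assumes "finite S" "\<And>n. n \<in> S \<Longrightarrow> l2 (u n)"
  shows "l2 (\<lambda>i. \<Sum>n\<in>S. u n i)" and "l2norm (\<lambda>i. \<Sum>n\<in>S. u n i) \<le> (\<Sum>n\<in>S. l2norm (u n))"
proof -
  have "l2 (\<lambda>i. \<Sum>n\<in>S. u n i) \<and> l2norm (\<lambda>i. \<Sum>n\<in>S. u n i) \<le> (\<Sum>n\<in>S. l2norm (u n))"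
    using assms
  proof (induction S rule: finite_induct)
    case (insert a S)
    then show ?case
      using l2_add[of "u a"] l2norm_triangle[of "u a" "\<lambda>i. \<Sum>n\<in>S. u n i"] by fastforce
  qed (simp add: l2norm_def)
  then show "l2 (\<lambda>i. \<Sum>n\<in>S. u n i)" "l2norm (\<lambda>i. \<Sum>n\<in>S. u n i) \<le> (\<Sum>n\<in>S. l2norm (u n))"
    by auto
qed

lemma l2inner_summable:
  assumes "l2 z" "l2 w"
  shows "(\<lambda>i. z i * cnj (w i)) summable_on UNIV"
proof -
  have bound: "norm (z i * cnj (w i)) \<le> (cmod (z i))^2 + (cmod (w i))^2" for i
    unfolding norm_mult complex_mod_cnj
    using sum_squares_bound[of "cmod (z i)" "cmod (w i)"]
      mult_nonneg_nonneg[OF norm_ge_zero norm_ge_zero, of "z i" "w i"] by linarith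
  have "(\<lambda>i. (cmod (z i))^2 + (cmod (w i))^2) summable_on UNIV"
    using assms unfolding l2_def by (intro summable_on_add)
  then have "(\<lambda>i. norm (z i * cnj (w i))) summable_on UNIV"
    by (rule summable_on_comparison_test) (use bound in auto)
  then show ?thesis
    using summable_on_iff_abs_summable_on_complex by blast
qed

lemma l2inner_self:
  assumes "l2 z"
  shows "l2inner z z = of_real ((l2norm z)^2)"
proof -
  have "((\<lambda>i. (cmod (z i))^2) has_sum (l2norm z)^2) UNIV"
    using assms unfolding l2_def l2norm_power2 by simp
  then have "((\<lambda>i. complex_of_real ((cmod (z i))^2)) has_sum of_real ((l2norm z)^2)) UNIV"
    by (rule has_sum_of_real)
  then show ?thesis
    unfolding l2inner_def complex_norm_square by (rule infsumI)
qed

lemma l2inner_cnj: "l2inner w z = cnj (l2inner z w)"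
  unfolding l2inner_def infsum_cnj[symmetric] by (simp add: mult.commute)

lemma l2inner_add_left:
  assumes "l2 a" "l2 b" "l2 w"
  shows "l2inner (\<lambda>i. a i + b i) w = l2inner a w + l2inner b w"
  unfolding l2inner_def
  using infsum_add[OF l2inner_summable[OF assms(1,3)] l2inner_summable[OF assms(2,3)]]
  by (simp add: distrib_right)

lemma l2inner_add_right:
  assumes "l2 a" "l2 b" "l2 w"
  shows "l2inner w (\<lambda>i. a i + b i) = l2inner w a + l2inner w b"
  by (metis l2inner_cnj l2inner_add_left[OF assms] complex_cnj_add)

lemma l2inner_scale_right: "l2inner w (\<lambda>i. c * a i) = cnj c * l2inner w a"
  unfolding l2inner_def by (simp add: ac_simps infsum_cmult_right')

lemma l2norm_add_power2:
  assumes "l2 x" "l2 y" "l2inner x y = 0"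
  shows "(l2norm (\<lambda>i. x i + y i))^2 = (l2norm x)^2 + (l2norm y)^2"
proof -
  have "l2inner y x = 0" using l2inner_cnj[of y x] assms(3) by simp
  then have "l2inner (\<lambda>i. x i + y i) (\<lambda>i. x i + y i) = l2inner x x + l2inner y y"
    using assms l2inner_add_left[OF assms(1,2) l2_add[OF assms(1,2)]]
      l2inner_add_right[OF assms(1,2)] by simp
  then have "of_real ((l2norm (\<lambda>i. x i + y i))^2) = (of_real ((l2norm x)^2 + (l2norm y)^2) :: complex)"
    unfolding of_real_add l2inner_self[OF l2_add[OF assms(1,2)], symmetric]
      l2inner_self[OF assms(1), symmetric] l2inner_self[OF assms(2), symmetric] .
  then show ?thesis using of_real_eq_iff by blast
qed

lemma opnorm_least:
  assumes "0 \<le> B" "\<And>z. l2 z \<Longrightarrow> l2norm z \<le> 1 \<Longrightarrow> l2norm (T z) \<le> B"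
  shows "opnorm T \<le> B"
  unfolding opnorm_def
proof (rule cSup_least)
  have "l2norm (\<lambda>i. 0::complex) \<le> 1" by (simp add: l2norm_def)
  then show "{l2norm (T z) |z. l2 z \<and> l2norm z \<le> 1} \<noteq> {}" using l2_zero by blast
qed (use assms in auto)

lemma l2norm_le_opnorm:
  assumes "\<And>z. l2 z \<Longrightarrow> l2norm z \<le> 1 \<Longrightarrow> l2norm (T z) \<le> B" "l2 z" "l2norm z \<le> 1"
  shows "l2norm (T z) \<le> opnorm T"
  unfolding opnorm_def
  by (rule cSup_upper) (use assms in \<open>auto intro!: bdd_aboveI[of _ B]\<close>)

lemma opnorm_nonneg:
  assumes "\<And>z. l2 z \<Longrightarrow> l2norm z \<le> 1 \<Longrightarrow> l2norm (T z) \<le> B"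
  shows "0 \<le> opnorm T"
proof -
  have "l2norm (T (\<lambda>i. 0)) \<le> opnorm T"
    by (rule l2norm_le_opnorm[OF assms]) (auto simp: l2norm_def)
  then show ?thesis using l2norm_nonneg order_trans by blast
qed

section \<open>Admissible representations and the universal norm\<close>

locale covariant_rep =
  fixes \<phi> :: "'x::topological_space \<Rightarrow> 'x"
    and \<rho> :: "('x \<Rightarrow> complex) \<Rightarrow> ('h \<Rightarrow> complex) \<Rightarrow> ('h \<Rightarrow> complex)"
    and V :: "('h \<Rightarrow> complex) \<Rightarrow> ('h \<Rightarrow> complex)"
  assumes admissible: "is_rep \<phi> \<rho> V"
begin

lemma rho_bounded_op: "continuous_on UNIV f \<Longrightarrow> bounded_op (\<rho> f)"
  using admissible unfolding is_rep_def by blast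

lemma l2_rho: "continuous_on UNIV f \<Longrightarrow> l2 z \<Longrightarrow> l2 (\<rho> f z)"
  using rho_bounded_op unfolding bounded_op_def by blast

lemma rho_scale_vec: "continuous_on UNIV f \<Longrightarrow> l2 z \<Longrightarrow> \<rho> f (\<lambda>i. c * z i) = (\<lambda>i. c * \<rho> f z i)"
  using rho_bounded_op unfolding bounded_op_def by blast

lemma rho_add:
  "continuous_on UNIV f \<Longrightarrow> continuous_on UNIV g \<Longrightarrow> l2 z \<Longrightarrow>
    \<rho> (\<lambda>x. f x + g x) z = (\<lambda>i. \<rho> f z i + \<rho> g z i)"
  using admissible unfolding is_rep_def by blast

lemma rho_scale: "continuous_on UNIV f \<Longrightarrow> l2 z \<Longrightarrow> \<rho> (\<lambda>x. c * f x) z = (\<lambda>i. c * \<rho> f z i)"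
  using admissible unfolding is_rep_def by blast

lemma rho_mult:
  "continuous_on UNIV f \<Longrightarrow> continuous_on UNIV g \<Longrightarrow> l2 z \<Longrightarrow>
    \<rho> (\<lambda>x. f x * g x) z = \<rho> f (\<rho> g z)"
  using admissible unfolding is_rep_def by blast

lemma rho_adjoint:
  "continuous_on UNIV f \<Longrightarrow> l2 z \<Longrightarrow> l2 w \<Longrightarrow>
    l2inner (\<rho> f z) w = l2inner z (\<rho> (\<lambda>x. cnj (f x)) w)"
  using admissible unfolding is_rep_def by blast

lemma rho_covariant:
  "continuous_on UNIV f \<Longrightarrow> l2 z \<Longrightarrow> \<rho> f (V z) = V (\<rho> (\<lambda>x. f (\<phi> x)) z)"
  using admissible unfolding is_rep_def by blast

lemma V_bounded_op: "bounded_op V"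
  using admissible unfolding is_rep_def by blast

lemma l2_V: "l2 z \<Longrightarrow> l2 (V z)"
  using V_bounded_op unfolding bounded_op_def by blast

lemma l2norm_V: "l2 z \<Longrightarrow> l2norm (V z) = l2norm z"
  using admissible unfolding is_rep_def by blast

lemma V_scale: "l2 z \<Longrightarrow> V (\<lambda>i. c * z i) = (\<lambda>i. c * V z i)"
  using V_bounded_op unfolding bounded_op_def by blast

lemma l2_V_power: "l2 z \<Longrightarrow> l2 ((V ^^ n) z)"
  by (induction n) (auto simp: l2_V)

lemma l2norm_V_power: "l2 z \<Longrightarrow> l2norm ((V ^^ n) z) = l2norm z"
  by (induction n) (auto simp: l2_V_power l2norm_V)

lemma V_power_scale: "l2 z \<Longrightarrow> (V ^^ n) (\<lambda>i. c * z i) = (\<lambda>i. c * (V ^^ n) z i)"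
  by (induction n) (auto simp: V_scale l2_V_power)

lemma l2inner_rho_square:
  assumes f: "continuous_on UNIV f" and z: "l2 z"
  shows "l2inner z (\<rho> (\<lambda>x. cnj (f x) * f x) z) = of_real ((l2norm (\<rho> f z))^2)"
proof -
  have "continuous_on UNIV (\<lambda>x. cnj (f x))" by (intro continuous_intros f)
  then have "l2inner z (\<rho> (\<lambda>x. cnj (f x) * f x) z) = l2inner (\<rho> f z) (\<rho> f z)"
    using rho_mult f z rho_adjoint[OF f z l2_rho[OF f z]] by simp
  then show ?thesis using l2inner_self[OF l2_rho[OF f z]] by simp
qed

lemma l2norm_rho_one_le:
  assumes z: "l2 z"
  shows "l2norm (\<rho> (\<lambda>x. 1) z) \<le> l2norm z"
proof -
  have one: "continuous_on UNIV (\<lambda>x::'x. 1::complex)" by simp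
  define a where "a = \<rho> (\<lambda>x. 1) z"
  define b where "b i = z i + (-1) * a i" for i
  have a: "l2 a" unfolding a_def by (rule l2_rho[OF one z])
  have b: "l2 b" unfolding b_def by (intro l2_add l2_scale z a)
  have "l2inner a z = of_real ((l2norm a)^2)"
    using rho_adjoint[OF one z z] l2inner_rho_square[OF one z] unfolding a_def by simp
  moreover have "l2inner a b = l2inner a z + cnj (-1) * l2inner a a"
    unfolding b_def by (simp only: l2inner_add_right[OF z l2_scale[OF a] a] l2inner_scale_right)
  ultimately have "l2inner a b = 0"
    using l2inner_self[OF a] by simp
  then have "(l2norm (\<lambda>i. a i + b i))^2 = (l2norm a)^2 + (l2norm b)^2"
    by (rule l2norm_add_power2[OF a b])
  moreover have "(\<lambda>i. a i + b i) = z" unfolding b_def by simp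
  ultimately have "(l2norm a)^2 \<le> (l2norm z)^2" by simp
  then show ?thesis
    unfolding a_def by (rule power2_le_imp_le) simp
qed

lemma l2norm_rho_add_complement:
  assumes f: "continuous_on UNIV f" and K: "\<And>x. cmod (f x) \<le> K" and z: "l2 z"
  shows "(l2norm (\<rho> f z))^2 + (l2norm (\<rho> (\<lambda>x. of_real (sqrt (K^2 - (cmod (f x))^2))) z))^2 =
    K^2 * (l2norm (\<rho> (\<lambda>x. 1) z))^2"
proof -
  define h where "h x = complex_of_real (sqrt (K^2 - (cmod (f x))^2))" for x
  define c where "c = complex_of_real (K^2)"
  have h: "continuous_on UNIV h" unfolding h_def by (intro continuous_intros f)
  have one: "continuous_on UNIV (\<lambda>x::'x. 1::complex)" by simp
  have ff: "continuous_on UNIV (\<lambda>x. cnj (f x) * f x)" by (intro continuous_intros f)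
  have hh: "cnj (h x) * h x = c * 1 + (-1) * (cnj (f x) * f x)" for x
  proof -
    have "(cmod (f x))^2 \<le> K^2" by (rule power_mono[OF K norm_ge_zero])
    then have "cnj (h x) * h x = of_real (K^2) - of_real ((cmod (f x))^2)"
      unfolding h_def by (simp flip: of_real_mult)
    then show ?thesis unfolding c_def complex_norm_square by (simp add: mult.commute)
  qed
  have l1: "l2 (\<rho> (\<lambda>x. 1) z)" and lff: "l2 (\<rho> (\<lambda>x. cnj (f x) * f x) z)"
    by (intro l2_rho one ff z)+
  have "of_real ((l2norm (\<rho> h z))^2) = l2inner z (\<rho> (\<lambda>x. c * 1 + (-1) * (cnj (f x) * f x)) z)"
    using l2inner_rho_square[OF h z] hh by simp
  also have "\<dots> = cnj c * l2inner z (\<rho> (\<lambda>x. 1) z) + cnj (-1) * l2inner z (\<rho> (\<lambda>x. cnj (f x) * f x) z)"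
  proof -
    have "continuous_on UNIV (\<lambda>x::'x. c * 1)" "continuous_on UNIV (\<lambda>x. (-1) * (cnj (f x) * f x))"
      by (intro continuous_intros f)+
    then show ?thesis
      by (simp only: rho_add[OF _ _ z] rho_scale[OF one z] rho_scale[OF ff z]
          l2inner_add_right[OF l2_scale[OF l1] l2_scale[OF lff] z] l2inner_scale_right)
  qed
  also have "\<dots> = of_real (K^2) * of_real ((l2norm (\<rho> (\<lambda>x. 1) z))^2) - of_real ((l2norm (\<rho> f z))^2)"
    using l2inner_rho_square[OF one z]
    unfolding l2inner_rho_square[OF f z] c_def complex_cnj_complex_of_real by simp
  also have "\<dots> = of_real (K^2 * (l2norm (\<rho> (\<lambda>x. 1) z))^2 - (l2norm (\<rho> f z))^2)"
    by (simp only: of_real_mult of_real_diff)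
  finally have "(l2norm (\<rho> h z))^2 = K^2 * (l2norm (\<rho> (\<lambda>x. 1) z))^2 - (l2norm (\<rho> f z))^2"
    by (simp only: of_real_eq_iff)
  then show ?thesis unfolding h_def by simp
qed

lemma l2norm_rho_le:
  assumes f: "continuous_on UNIV f" and K: "\<And>x. cmod (f x) \<le> K" and z: "l2 z"
  shows "l2norm (\<rho> f z) \<le> K * l2norm z"
proof -
  have "(l2norm (\<rho> f z))^2 \<le> K^2 * (l2norm (\<rho> (\<lambda>x. 1) z))^2"
    using l2norm_rho_add_complement[OF assms] zero_le_power2 by (metis le_add_same_cancel1)
  also have "\<dots> \<le> K^2 * (l2norm z)^2"
    by (intro mult_left_mono power_mono l2norm_rho_one_le z) simp_all
  also have "\<dots> = (K * l2norm z)^2" by (simp add: power_mult_distrib)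
  finally have "(l2norm (\<rho> f z))^2 \<le> (K * l2norm z)^2" .
  moreover have "0 \<le> K" using K[of undefined] norm_ge_zero order_trans by blast
  ultimately show ?thesis by (metis power2_le_imp_le mult_nonneg_nonneg l2norm_nonneg)
qed

lemma l2_rep_poly:
  assumes "is_poly fs" "l2 z"
  shows "l2 (rep_poly \<rho> V fs z)"
  using assms unfolding rep_poly_def is_poly_def by (intro l2_sum(1) l2_V_power l2_rho) auto

lemma l2norm_rep_poly_le:
  assumes fs: "is_poly fs" and K: "\<And>n x. cmod (fs n x) \<le> K n" and z: "l2 z"
  shows "l2norm (rep_poly \<rho> V fs z) \<le> (\<Sum>n\<in>{n. fs n \<noteq> (\<lambda>x. 0)}. K n) * l2norm z"
proof -
  have fin: "finite {n. fs n \<noteq> (\<lambda>x. 0)}" and cont: "\<And>n. continuous_on UNIV (fs n)"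
    using fs unfolding is_poly_def by auto
  have "l2norm (rep_poly \<rho> V fs z) \<le> (\<Sum>n\<in>{n. fs n \<noteq> (\<lambda>x. 0)}. l2norm ((V ^^ n) (\<rho> (fs n) z)))"
    unfolding rep_poly_def using fin cont z by (intro l2_sum(2) l2_V_power l2_rho)
  also have "\<dots> \<le> (\<Sum>n\<in>{n. fs n \<noteq> (\<lambda>x. 0)}. K n * l2norm z)"
    using l2norm_rho_le[OF cont K z] by (simp add: l2norm_V_power l2_rho cont z sum_mono)
  finally show ?thesis by (simp add: sum_distrib_right)
qed

lemma l2norm_rep_poly_le_on_unit_ball:
  assumes fs: "is_poly fs" and K: "\<And>n x. cmod (fs n x) \<le> K n" and z: "l2 z" "l2norm z \<le> 1"
  shows "l2norm (rep_poly \<rho> V fs z) \<le> (\<Sum>n\<in>{n. fs n \<noteq> (\<lambda>x. 0)}. K n)"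
proof -
  have "0 \<le> K n" for n using K[of n undefined] norm_ge_zero order_trans by blast
  then have "0 \<le> (\<Sum>n\<in>{n. fs n \<noteq> (\<lambda>x. 0)}. K n)" by (simp add: sum_nonneg)
  then show ?thesis
    using l2norm_rep_poly_le[OF fs K z(1)] mult_left_mono[OF z(2)] by fastforce
qed

lemma rep_poly_scale:
  assumes fs: "is_poly fs" and z: "l2 z"
  shows "rep_poly \<rho> V fs (\<lambda>i. c * z i) = (\<lambda>i. c * rep_poly \<rho> V fs z i)"
proof -
  have cont: "\<And>n. continuous_on UNIV (fs n)" using fs unfolding is_poly_def by auto
  then show ?thesis
    unfolding rep_poly_def
    by (simp add: rho_scale_vec z V_power_scale l2_rho sum_distrib_left)
qed

end

lemma is_poly_coeffs_bounded:
  assumes "compact (UNIV :: 'x::topological_space set)" "is_poly (fs :: nat \<Rightarrow> 'x \<Rightarrow> complex)"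
  obtains K where "\<And>n x. cmod (fs n x) \<le> K n"
proof -
  have "\<exists>k. \<forall>x. cmod (fs n x) \<le> k" for n
  proof -
    have "compact (range (fs n))"
      using assms unfolding is_poly_def by (blast intro: compact_continuous_image)
    then have "bounded (range (fs n))" by (rule compact_imp_bounded)
    then show ?thesis unfolding bounded_iff by auto
  qed
  then show ?thesis using that by metis
qed

locale compact_covariant_rep = covariant_rep \<phi> \<rho> V
  for \<phi> :: "'x::topological_space \<Rightarrow> 'x" and \<rho> and V +
  assumes compact_space: "compact (UNIV :: 'x set)"
begin

lemma rep_poly_unit_ball_bounded:
  assumes "is_poly fs"
  obtains B where "\<And>z. l2 z \<Longrightarrow> l2norm z \<le> 1 \<Longrightarrow> l2norm (rep_poly \<rho> V fs z) \<le> B"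
proof -
  obtain K where "\<And>n x. cmod (fs n x) \<le> K n"
    using is_poly_coeffs_bounded[OF compact_space assms] by blast
  then show ?thesis
    using that l2norm_rep_poly_le_on_unit_ball[OF assms] by blast
qed

lemma l2norm_rep_poly_le_opnorm:
  assumes "is_poly fs" "l2 z" "l2norm z \<le> 1"
  shows "l2norm (rep_poly \<rho> V fs z) \<le> opnorm (rep_poly \<rho> V fs)"
  using rep_poly_unit_ball_bounded[OF assms(1)] l2norm_le_opnorm assms(2,3) by metis

lemma opnorm_rep_poly_nonneg: "is_poly fs \<Longrightarrow> 0 \<le> opnorm (rep_poly \<rho> V fs)"
  using rep_poly_unit_ball_bounded opnorm_nonneg by metis

lemma l2norm_rep_poly_le_opnorm_mult:
  assumes fs: "is_poly fs" and w: "l2 w"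
  shows "l2norm (rep_poly \<rho> V fs w) \<le> opnorm (rep_poly \<rho> V fs) * l2norm w"
proof (cases "l2norm w = 0")
  case True
  then have "w = (\<lambda>i. 0 * w i)" using l2norm_eq_0D[OF w] by auto
  then have "rep_poly \<rho> V fs w = (\<lambda>i. 0)"
    using rep_poly_scale[OF fs w, of 0] by simp
  then show ?thesis using True by (simp add: l2norm_def)
next
  case False
  then have pos: "0 < l2norm w" using l2norm_nonneg[of w] by linarith
  define c where "c = complex_of_real (1 / l2norm w)"
  have "cmod c = 1 / l2norm w" unfolding c_def norm_of_real using pos by simp
  then have "l2norm (rep_poly \<rho> V fs (\<lambda>i. c * w i)) \<le> opnorm (rep_poly \<rho> V fs)"
    using pos by (intro l2norm_rep_poly_le_opnorm[OF fs l2_scale[OF w]]) (simp add: l2norm_scale)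
  then show ?thesis
    using pos \<open>cmod c = _\<close> by (simp add: rep_poly_scale[OF fs w] l2norm_scale field_simps)
qed

end

lemma opnorm_le_univ_norm:
  fixes \<rho> :: "('x::topological_space \<Rightarrow> complex) \<Rightarrow> ('h \<Rightarrow> complex) \<Rightarrow> ('h \<Rightarrow> complex)"
  assumes cpt: "compact (UNIV :: 'x set)" and fs: "is_poly fs" and rep: "is_rep \<phi> \<rho> V"
  shows "opnorm (rep_poly \<rho> V fs) \<le> univ_norm TYPE('h) \<phi> fs"
proof -
  let ?S = "{opnorm (rep_poly \<rho>' V' fs) |
    (\<rho>' :: ('x \<Rightarrow> complex) \<Rightarrow> ('h \<Rightarrow> complex) \<Rightarrow> ('h \<Rightarrow> complex)) V'. is_rep \<phi> \<rho>' V'}"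
  obtain K where K: "\<And>n x. cmod (fs n x) \<le> K n"
    using is_poly_coeffs_bounded[OF cpt fs] by blast
  have "0 \<le> K n" for n using K[of n undefined] norm_ge_zero order_trans by blast
  then have "opnorm (rep_poly \<rho>' V' fs) \<le> (\<Sum>n\<in>{n. fs n \<noteq> (\<lambda>x. 0)}. K n)"
    if "is_rep \<phi> \<rho>' V'" for \<rho>' :: "('x \<Rightarrow> complex) \<Rightarrow> ('h \<Rightarrow> complex) \<Rightarrow> ('h \<Rightarrow> complex)" and V'
    using covariant_rep.l2norm_rep_poly_le_on_unit_ball[OF covariant_rep.intro[OF that] fs K]
    by (intro opnorm_least sum_nonneg) auto
  then have "bdd_above ?S" by (intro bdd_aboveI) blast
  moreover have "opnorm (rep_poly \<rho> V fs) \<in> ?S" using rep by blast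
  ultimately show ?thesis
    unfolding univ_norm_def by (rule cSup_upper[rotated])
qed

section \<open>Moving a representation along an injection\<close>

definition extend_along :: "('a \<Rightarrow> 'h) \<Rightarrow> ('a \<Rightarrow> complex) \<Rightarrow> 'h \<Rightarrow> complex" where
  "extend_along g w = (\<lambda>h. if h \<in> range g then w (inv g h) else 0)"

definition restrict_along :: "('a \<Rightarrow> 'h) \<Rightarrow> ('h \<Rightarrow> complex) \<Rightarrow> 'a \<Rightarrow> complex" where
  "restrict_along g z = (\<lambda>a. z (g a))"

definition off_range :: "('a \<Rightarrow> 'h) \<Rightarrow> ('h \<Rightarrow> complex) \<Rightarrow> 'h \<Rightarrow> complex" where
  "off_range g z = (\<lambda>h. if h \<in> range g then 0 else z h)"

lemma restrict_extend_along: "inj g \<Longrightarrow> restrict_along g (extend_along g w) = w"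
  by (simp add: restrict_along_def extend_along_def)

lemma off_range_extend_along: "off_range g (extend_along g w) = (\<lambda>h. 0)"
  by (auto simp: off_range_def extend_along_def)

lemma extend_restrict_off_range:
  "inj g \<Longrightarrow> (\<lambda>h. extend_along g (restrict_along g z) h + off_range g z h) = z"
  by (auto simp: off_range_def extend_along_def restrict_along_def f_inv_into_f)

lemma extend_along_add: "extend_along g (\<lambda>a. p a + q a) = (\<lambda>h. extend_along g p h + extend_along g q h)"
  by (auto simp: extend_along_def)

lemma extend_along_scale: "extend_along g (\<lambda>a. c * p a) = (\<lambda>h. c * extend_along g p h)"
  by (auto simp: extend_along_def)

lemma restrict_along_add: "restrict_along g (\<lambda>h. z h + w h) = (\<lambda>a. restrict_along g z a + restrict_along g w a)"
  by (simp add: restrict_along_def)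

lemma restrict_along_scale: "restrict_along g (\<lambda>h. c * z h) = (\<lambda>a. c * restrict_along g z a)"
  by (simp add: restrict_along_def)

lemma off_range_add: "off_range g (\<lambda>h. z h + w h) = (\<lambda>h. off_range g z h + off_range g w h)"
  by (auto simp: off_range_def)

lemma off_range_scale: "off_range g (\<lambda>h. c * z h) = (\<lambda>h. c * off_range g z h)"
  by (auto simp: off_range_def)

lemma
  assumes "inj g" and F0: "\<And>h. F h 0 = 0"
  shows infsum_extend_along: "(\<Sum>\<^sub>\<infinity>h. F h (extend_along g w h)) = (\<Sum>\<^sub>\<infinity>a. F (g a) (w a))"
    and summable_on_extend_along:
      "(\<lambda>h. F h (extend_along g w h)) summable_on UNIV \<longleftrightarrow> (\<lambda>a. F (g a) (w a)) summable_on UNIV"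
proof -
  have off: "\<And>h. h \<notin> range g \<Longrightarrow> F h (extend_along g w h) = 0"
    by (simp add: extend_along_def F0)
  have on: "(\<lambda>h. F h (extend_along g w h)) \<circ> g = (\<lambda>a. F (g a) (w a))"
    using assms by (auto simp: extend_along_def)
  have "(\<Sum>\<^sub>\<infinity>h. F h (extend_along g w h)) = (\<Sum>\<^sub>\<infinity>h\<in>range g. F h (extend_along g w h))"
    by (rule infsum_cong_neutral) (auto simp: off)
  also have "\<dots> = (\<Sum>\<^sub>\<infinity>a. F (g a) (w a))"
    using infsum_reindex[of g UNIV "\<lambda>h. F h (extend_along g w h)"] assms(1) on by simp
  finally show "(\<Sum>\<^sub>\<infinity>h. F h (extend_along g w h)) = (\<Sum>\<^sub>\<infinity>a. F (g a) (w a))" .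
  have "(\<lambda>h. F h (extend_along g w h)) summable_on UNIV \<longleftrightarrow>
      (\<lambda>h. F h (extend_along g w h)) summable_on range g"
    by (rule summable_on_cong_neutral) (auto simp: off)
  also have "\<dots> \<longleftrightarrow> (\<lambda>a. F (g a) (w a)) summable_on UNIV"
    using summable_on_reindex[of g UNIV "\<lambda>h. F h (extend_along g w h)"] assms(1) on by simp
  finally show "(\<lambda>h. F h (extend_along g w h)) summable_on UNIV \<longleftrightarrow> (\<lambda>a. F (g a) (w a)) summable_on UNIV" .
qed

lemma
  assumes "inj g" "l2 w"
  shows l2_extend_along: "l2 (extend_along g w)"
    and l2norm_extend_along: "l2norm (extend_along g w) = l2norm w"
  using assms summable_on_extend_along[OF assms(1), of "\<lambda>h x. (cmod x)^2"]
    infsum_extend_along[OF assms(1), of "\<lambda>h x. (cmod x)^2"]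
  by (simp_all add: l2_def l2norm_def)

lemma l2inner_extend_along_left:
  "inj g \<Longrightarrow> l2inner (extend_along g a) z = l2inner a (restrict_along g z)"
  unfolding l2inner_def restrict_along_def
  using infsum_extend_along[of g "\<lambda>h x. x * cnj (z h)"] by simp

lemma l2inner_extend_along_right:
  "inj g \<Longrightarrow> l2inner z (extend_along g a) = l2inner (restrict_along g z) a"
  unfolding l2inner_def restrict_along_def
  using infsum_extend_along[of g "\<lambda>h x. z h * cnj x"] by simp

lemma l2inner_extend_along_off_range: "l2inner (extend_along g a) (off_range g z) = 0"
proof -
  have "extend_along g a i * cnj (off_range g z i) = 0" for i
    by (simp add: extend_along_def off_range_def)
  then show ?thesis unfolding l2inner_def by (simp only:) simp
qed

lemma l2_off_range: "l2 z \<Longrightarrow> l2 (off_range g z)"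
  unfolding l2_def by (rule summable_on_comparison_test) (auto simp: off_range_def)

lemma l2norm_extend_along_add_off_range:
  assumes "inj g" "l2 w" "l2 z"
  shows "(l2norm (\<lambda>h. extend_along g w h + off_range g z h))^2 = (l2norm w)^2 + (l2norm (off_range g z))^2"
  using l2norm_add_power2[OF l2_extend_along[OF assms(1,2)] l2_off_range[OF assms(3)]
      l2inner_extend_along_off_range] l2norm_extend_along[OF assms(1,2)] by simp

lemma
  assumes "inj g" "l2 z"
  shows l2_restrict_along: "l2 (restrict_along g z)"
    and l2norm_restrict_along_le: "l2norm (restrict_along g z) \<le> l2norm z"
proof -
  have "(\<lambda>h. (cmod (z h))^2) summable_on range g"
    using assms(2) unfolding l2_def by (rule summable_on_subset_banach) auto
  then show l2r: "l2 (restrict_along g z)"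
    using summable_on_reindex[of g UNIV "\<lambda>h. (cmod (z h))^2"] assms(1)
    by (simp add: l2_def restrict_along_def o_def)
  have "(l2norm z)^2 = (l2norm (restrict_along g z))^2 + (l2norm (off_range g z))^2"
    using extend_restrict_off_range[OF assms(1), of z]
      l2norm_extend_along_add_off_range[OF assms(1) l2r assms(2)] by simp
  then have "(l2norm (restrict_along g z))^2 \<le> (l2norm z)^2" by simp
  then show "l2norm (restrict_along g z) \<le> l2norm z"
    by (rule power2_le_imp_le) simp
qed

definition transport_rho ::
  "('a \<Rightarrow> 'h) \<Rightarrow> (('x \<Rightarrow> complex) \<Rightarrow> ('a \<Rightarrow> complex) \<Rightarrow> ('a \<Rightarrow> complex)) \<Rightarrow>
    ('x \<Rightarrow> complex) \<Rightarrow> ('h \<Rightarrow> complex) \<Rightarrow> ('h \<Rightarrow> complex)" where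
  "transport_rho g \<rho> f z = extend_along g (\<rho> f (restrict_along g z))"

text \<open>Off the range of g the transported isometry is the identity, so that it remains isometric.\<close>
definition transport_V ::
  "('a \<Rightarrow> 'h) \<Rightarrow> (('a \<Rightarrow> complex) \<Rightarrow> ('a \<Rightarrow> complex)) \<Rightarrow> ('h \<Rightarrow> complex) \<Rightarrow> ('h \<Rightarrow> complex)" where
  "transport_V g V z = (\<lambda>h. extend_along g (V (restrict_along g z)) h + off_range g z h)"

lemma bounded_op_transport:
  assumes g: "inj g" and T: "bounded_op T"
  shows "bounded_op (\<lambda>z. extend_along g (T (restrict_along g z)))"
proof -
  note r = l2_restrict_along[OF g]
  have l2T: "\<And>z. l2 z \<Longrightarrow> l2 (T z)"
    and add: "\<And>z w. l2 z \<Longrightarrow> l2 w \<Longrightarrow> T (\<lambda>i. z i + w i) = (\<lambda>i. T z i + T w i)"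
    and scale: "\<And>c z. l2 z \<Longrightarrow> T (\<lambda>i. c * z i) = (\<lambda>i. c * T z i)"
    using T unfolding bounded_op_def by blast+
  obtain C where C: "\<And>z. l2 z \<Longrightarrow> l2norm (T z) \<le> C * l2norm z"
    using T unfolding bounded_op_def by blast
  have "l2norm (extend_along g (T (restrict_along g z))) \<le> max C 0 * l2norm z" if z: "l2 z" for z
  proof -
    have "l2norm (extend_along g (T (restrict_along g z))) \<le> C * l2norm (restrict_along g z)"
      using C[OF r[OF z]] by (simp add: l2norm_extend_along[OF g l2T[OF r[OF z]]])
    also have "\<dots> \<le> max C 0 * l2norm z"
      using l2norm_restrict_along_le[OF g z]
      by (metis l2norm_nonneg max.cobounded1 max.cobounded2 mult_mono)
    finally show ?thesis .
  qed
  moreover have "\<And>z. l2 z \<Longrightarrow> l2 (extend_along g (T (restrict_along g z)))"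
    using g r l2T by (blast intro: l2_extend_along)
  ultimately show ?thesis
    unfolding bounded_op_def restrict_along_add restrict_along_scale
    by (simp add: add scale r extend_along_add extend_along_scale) blast
qed

lemma
  assumes g: "inj g" and V: "bounded_op V" and iso: "\<And>z. l2 z \<Longrightarrow> l2norm (V z) = l2norm z"
  shows l2norm_transport_V: "l2 z \<Longrightarrow> l2norm (transport_V g V z) = l2norm z"
    and bounded_op_transport_V: "bounded_op (transport_V g V)"
proof -
  note r = l2_restrict_along[OF g]
  have l2V: "\<And>z. l2 z \<Longrightarrow> l2 (V z)"
    and add: "\<And>z w. l2 z \<Longrightarrow> l2 w \<Longrightarrow> V (\<lambda>i. z i + w i) = (\<lambda>i. V z i + V w i)"
    and scale: "\<And>c z. l2 z \<Longrightarrow> V (\<lambda>i. c * z i) = (\<lambda>i. c * V z i)"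
    using V unfolding bounded_op_def by blast+
  have l2_TV: "l2 (transport_V g V z)" if "l2 z" for z
    unfolding transport_V_def using that by (intro l2_add l2_extend_along[OF g] l2V r l2_off_range)
  show norm_TV: "l2norm (transport_V g V z) = l2norm z" if z: "l2 z" for z
  proof -
    have "(l2norm (transport_V g V z))^2 = (l2norm (restrict_along g z))^2 + (l2norm (off_range g z))^2"
      unfolding transport_V_def
      using l2norm_extend_along_add_off_range[OF g l2V[OF r[OF z]] z] iso[OF r[OF z]] by simp
    also have "\<dots> = (l2norm z)^2"
      using l2norm_extend_along_add_off_range[OF g r[OF z] z] extend_restrict_off_range[OF g, of z]
      by simp
    finally show ?thesis by (simp add: power2_eq_iff_nonneg)
  qed
  show "bounded_op (transport_V g V)"
    unfolding bounded_op_def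
  proof (intro conjI allI impI exI[of _ 1])
    fix z w :: "'b \<Rightarrow> complex" assume "l2 z" "l2 w"
    then show "transport_V g V (\<lambda>i. z i + w i) = (\<lambda>i. transport_V g V z i + transport_V g V w i)"
      unfolding transport_V_def restrict_along_add off_range_add
      by (simp add: add r extend_along_add algebra_simps)
  next
    fix c and z :: "'b \<Rightarrow> complex" assume "l2 z"
    then show "transport_V g V (\<lambda>i. c * z i) = (\<lambda>i. c * transport_V g V z i)"
      unfolding transport_V_def restrict_along_scale off_range_scale
      by (simp add: scale r extend_along_scale algebra_simps)
  qed (simp_all add: l2_TV norm_TV)
qed

lemma is_rep_transport:
  fixes \<rho> :: "('x::topological_space \<Rightarrow> complex) \<Rightarrow> ('a \<Rightarrow> complex) \<Rightarrow> ('a \<Rightarrow> complex)"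
    and g :: "'a \<Rightarrow> 'h"
  assumes g: "inj g" and rep: "is_rep \<phi> \<rho> V"
  shows "is_rep \<phi> (transport_rho g \<rho>) (transport_V g V)"
proof -
  interpret covariant_rep \<phi> \<rho> V by (rule covariant_rep.intro[OF rep])
  note r = l2_restrict_along[OF g]
  have restrict_TV: "restrict_along g (transport_V g V z) = V (restrict_along g z)" for z
    using g by (auto simp: transport_V_def restrict_along_def extend_along_def off_range_def)
  show ?thesis
    unfolding is_rep_def
  proof (intro conjI allI impI)
    fix f :: "'x \<Rightarrow> complex" assume "continuous_on UNIV f"
    then show "bounded_op (transport_rho g \<rho> f)"
      unfolding transport_rho_def[abs_def] by (intro bounded_op_transport g rho_bounded_op)
  next
    fix f f' :: "'x \<Rightarrow> complex" and z :: "'h \<Rightarrow> complex"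
    assume "continuous_on UNIV f" "continuous_on UNIV f'" "l2 z"
    then show "transport_rho g \<rho> (\<lambda>x. f x + f' x) z = (\<lambda>i. transport_rho g \<rho> f z i + transport_rho g \<rho> f' z i)"
      and "transport_rho g \<rho> (\<lambda>x. f x * f' x) z = transport_rho g \<rho> f (transport_rho g \<rho> f' z)"
      unfolding transport_rho_def
      by (simp_all add: rho_add rho_mult r extend_along_add restrict_extend_along[OF g])
  next
    fix c and f :: "'x \<Rightarrow> complex" and z :: "'h \<Rightarrow> complex" assume "continuous_on UNIV f" "l2 z"
    then show "transport_rho g \<rho> (\<lambda>x. c * f x) z = (\<lambda>i. c * transport_rho g \<rho> f z i)"
      unfolding transport_rho_def by (simp add: rho_scale r extend_along_scale)
  next
    fix f :: "'x \<Rightarrow> complex" and z w :: "'h \<Rightarrow> complex" assume "continuous_on UNIV f" "l2 z" "l2 w"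
    then show "l2inner (transport_rho g \<rho> f z) w = l2inner z (transport_rho g \<rho> (\<lambda>x. cnj (f x)) w)"
      unfolding transport_rho_def l2inner_extend_along_left[OF g] l2inner_extend_along_right[OF g]
      by (intro rho_adjoint r)
  next
    fix f :: "'x \<Rightarrow> complex" and z :: "'h \<Rightarrow> complex" assume "continuous_on UNIV f" "l2 z"
    then show "transport_rho g \<rho> f (transport_V g V z) = transport_V g V (transport_rho g \<rho> (\<lambda>x. f (\<phi> x)) z)"
      unfolding transport_rho_def restrict_TV
      by (simp add: rho_covariant r transport_V_def restrict_extend_along[OF g] off_range_extend_along)
  qed (simp_all add: l2norm_transport_V[OF g V_bounded_op] l2norm_V bounded_op_transport_V[OF g V_bounded_op])
qed

lemma transport_V_power_extend_along:
  "inj g \<Longrightarrow> (transport_V g V ^^ n) (extend_along g u) = extend_along g ((V ^^ n) u)"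
  by (induction n) (simp_all add: transport_V_def restrict_extend_along off_range_extend_along)

lemma rep_poly_transport:
  assumes "inj g"
  shows "rep_poly (transport_rho g \<rho>) (transport_V g V) fs (extend_along g w) =
    extend_along g (rep_poly \<rho> V fs w)"
  unfolding rep_poly_def transport_rho_def restrict_extend_along[OF assms]
    transport_V_power_extend_along[OF assms]
  by (simp add: extend_along_def fun_eq_iff)

lemma opnorm_le_univ_norm_of_infinite:
  fixes \<rho> :: "('x::topological_space \<Rightarrow> complex) \<Rightarrow> (nat \<Rightarrow> complex) \<Rightarrow> (nat \<Rightarrow> complex)"
  assumes cpt: "compact (UNIV :: 'x set)" and fs: "is_poly fs" and inf: "infinite (UNIV :: 'h set)"
    and rep: "is_rep \<phi> \<rho> V"
  shows "opnorm (rep_poly \<rho> V fs) \<le> univ_norm TYPE('h) \<phi> fs"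
proof -
  obtain g :: "nat \<Rightarrow> 'h" where g: "inj g"
    using iffD1[OF infinite_iff_countable_subset inf] by blast
  interpret R: compact_covariant_rep \<phi> \<rho> V
    using rep cpt by unfold_locales
  interpret T: compact_covariant_rep \<phi> "transport_rho g \<rho>" "transport_V g V"
    using is_rep_transport[OF g rep] cpt by unfold_locales
  have "opnorm (rep_poly \<rho> V fs) \<le> opnorm (rep_poly (transport_rho g \<rho>) (transport_V g V) fs)"
  proof (rule opnorm_least[OF T.opnorm_rep_poly_nonneg[OF fs]])
    fix w :: "nat \<Rightarrow> complex" assume w: "l2 w" "l2norm w \<le> 1"
    have "l2norm (rep_poly \<rho> V fs w) = l2norm (rep_poly (transport_rho g \<rho>) (transport_V g V) fs (extend_along g w))"
      by (simp add: rep_poly_transport[OF g] l2norm_extend_along[OF g] R.l2_rep_poly fs w)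
    also have "\<dots> \<le> opnorm (rep_poly (transport_rho g \<rho>) (transport_V g V) fs)"
      using w by (intro T.l2norm_rep_poly_le_opnorm fs) (simp_all add: l2_extend_along l2norm_extend_along g)
    finally show "l2norm (rep_poly \<rho> V fs w) \<le> opnorm (rep_poly (transport_rho g \<rho>) (transport_V g V) fs)" .
  qed
  also have "\<dots> \<le> univ_norm TYPE('h) \<phi> fs"
    by (rule opnorm_le_univ_norm[OF cpt fs is_rep_transport[OF g rep]])
  finally show ?thesis .
qed

section \<open>The orbit representations\<close>

lemma bounded_op_extend_along:
  fixes g :: "'a \<Rightarrow> 'a"
  assumes "inj g"
  shows "bounded_op (extend_along g)"
  unfolding bounded_op_def
  using assms l2_extend_along l2norm_extend_along extend_along_add extend_along_scale
  by (metis mult_1 order_refl)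

lemma shift_eq_extend_along_Suc: "shift = extend_along Suc"
proof (intro ext)
  fix z :: "nat \<Rightarrow> complex" and h :: nat
  show "shift z h = extend_along Suc z h"
    by (cases h) (auto simp: shift_def extend_along_def)
qed

lemma bounded_op_orbit_mult:
  assumes f: "\<And>x. cmod (f x) \<le> K"
  shows "bounded_op (orbit_mult \<phi> y f)"
proof -
  have K0: "0 \<le> K" using f[of undefined] norm_ge_zero order_trans by blast
  have le: "(cmod (orbit_mult \<phi> y f z i))^2 \<le> K^2 * (cmod (z i))^2" for z i
  proof -
    have "cmod (orbit_mult \<phi> y f z i) \<le> K * cmod (z i)"
      unfolding orbit_mult_def norm_mult by (intro mult_right_mono f) auto
    then show ?thesis by (metis norm_ge_zero power_mono power_mult_distrib)
  qed
  have "l2 (orbit_mult \<phi> y f z) \<and> l2norm (orbit_mult \<phi> y f z) \<le> K * l2norm z" if z: "l2 z" for z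
  proof -
    have s: "(\<lambda>i. K^2 * (cmod (z i))^2) summable_on UNIV"
      using z unfolding l2_def by (rule summable_on_cmult_right)
    then have l2o: "l2 (orbit_mult \<phi> y f z)"
      unfolding l2_def by (rule summable_on_comparison_test) (use le in auto)
    have "(l2norm (orbit_mult \<phi> y f z))^2 \<le> (\<Sum>\<^sub>\<infinity>i. K^2 * (cmod (z i))^2)"
      unfolding l2norm_power2 by (rule infsum_mono[OF l2o[unfolded l2_def] s le])
    also have "\<dots> = (K * l2norm z)^2"
      by (simp add: infsum_cmult_right' l2norm_power2 power_mult_distrib)
    finally show ?thesis
      using l2o K0 by (auto intro: power2_le_imp_le)
  qed
  then show ?thesis
    unfolding bounded_op_def by (auto simp: orbit_mult_def algebra_simps)
qed

lemma is_rep_orbit_mult_shift: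
  fixes \<phi> :: "'x::topological_space \<Rightarrow> 'x"
  assumes "compact (UNIV :: 'x set)"
  shows "is_rep \<phi> (orbit_mult \<phi> y) shift"
  unfolding is_rep_def
proof (intro conjI allI impI)
  fix f :: "'x \<Rightarrow> complex" assume "continuous_on UNIV f"
  then have "bounded (range f)"
    using assms by (intro compact_imp_bounded compact_continuous_image)
  then obtain K where "\<And>x. cmod (f x) \<le> K" unfolding bounded_iff by blast
  then show "bounded_op (orbit_mult \<phi> y f)" by (rule bounded_op_orbit_mult)
next
  show "bounded_op shift"
    unfolding shift_eq_extend_along_Suc by (rule bounded_op_extend_along[OF inj_Suc])
next
  fix z :: "nat \<Rightarrow> complex" assume "l2 z"
  then show "l2norm (shift z) = l2norm z"
    unfolding shift_eq_extend_along_Suc by (rule l2norm_extend_along[OF inj_Suc])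
next
  fix f :: "'x \<Rightarrow> complex" and z :: "nat \<Rightarrow> complex"
  show "orbit_mult \<phi> y f (shift z) = shift (orbit_mult \<phi> y (\<lambda>x. f (\<phi> x)) z)"
  proof
    fix i show "orbit_mult \<phi> y f (shift z) i = shift (orbit_mult \<phi> y (\<lambda>x. f (\<phi> x)) z) i"
      by (cases i) (simp_all add: orbit_mult_def shift_def)
  qed
next
  fix f :: "'x \<Rightarrow> complex" and z w :: "nat \<Rightarrow> complex"
  show "l2inner (orbit_mult \<phi> y f z) w = l2inner z (orbit_mult \<phi> y (\<lambda>x. cnj (f x)) w)"
    unfolding orbit_mult_def l2inner_def by (simp add: ac_simps)
qed (simp_all add: orbit_mult_def algebra_simps)

lemma period_pos_funpow:
  assumes "periodic_pt \<phi> y"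
  shows "0 < period \<phi> y" and "(\<phi> ^^ period \<phi> y) y = y"
proof -
  obtain q where "q > 0 \<and> (\<phi> ^^ q) y = y" using assms unfolding periodic_pt_def by blast
  then have "period \<phi> y > 0 \<and> (\<phi> ^^ period \<phi> y) y = y"
    unfolding period_def by (rule LeastI)
  then show "0 < period \<phi> y" "(\<phi> ^^ period \<phi> y) y = y" by auto
qed

lemma funpow_mod_period:
  assumes "(\<phi> ^^ p) y = y"
  shows "(\<phi> ^^ i) y = (\<phi> ^^ (i mod p)) y"
proof -
  have "(\<phi> ^^ (k * p)) y = y" for k
    by (induction k) (simp_all add: funpow_add assms)
  then show ?thesis
    by (metis comp_apply funpow_add mod_mult_div_eq mult.commute)
qed

lemma shift_power: "(shift ^^ n) z i = (if n \<le> i then z (i - n) else 0)"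
proof (induction n arbitrary: i)
  case (Suc n)
  then show ?case by (cases i) (auto simp: shift_def)
qed simp

lemma cyc_power:
  assumes "i < p"
  shows "(cyc p l ^^ n) z i = l ^ n * z ((i + n * (p - 1)) mod p)"
  using assms
proof (induction n arbitrary: i)
  case (Suc n)
  have "(i + p - 1) mod p < p" using Suc.prems by simp
  moreover have "((i + p - 1) mod p + n * (p - 1)) mod p = (i + Suc n * (p - 1)) mod p"
    using Suc.prems by (simp add: mod_add_left_eq add.assoc)
  ultimately show ?case
    using Suc.IH by (simp add: cyc_def)
qed simp

lemma compact_covariant_rep_orbit_mult_shift:
  fixes \<phi> :: "'x::topological_space \<Rightarrow> 'x"
  assumes "compact (UNIV :: 'x set)"
  shows "compact_covariant_rep \<phi> (orbit_mult \<phi> y) shift"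
  using assms is_rep_orbit_mult_shift by unfold_locales

section \<open>Comparison of the two norms on polynomials\<close>

lemma sum_lessThan_mult_mod:
  fixes g :: "nat \<Rightarrow> real"
  shows "(\<Sum>j<K * p. g (j mod p)) = real K * (\<Sum>j<p. g j)"
proof (induction K)
  case (Suc K)
  have "(\<Sum>j<Suc K * p. g (j mod p)) = (\<Sum>j<K * p. g (j mod p)) + (\<Sum>j\<in>{K * p..<K * p + p}. g (j mod p))"
    by (simp add: lessThan_atLeast0 sum.atLeastLessThan_concat add.commute)
  also have "(\<Sum>j\<in>{K * p..<K * p + p}. g (j mod p)) = (\<Sum>j<p. g j)"
    using sum.shift_bounds_nat_ivl[of "\<lambda>j. g (j mod p)" 0 "K * p" p]
    by (simp add: lessThan_atLeast0 add.commute)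
  finally show ?case using Suc by (simp add: algebra_simps)
qed simp

lemma sum_atLeastLessThan_mult_mod:
  fixes g :: "nat \<Rightarrow> real"
  assumes "M \<le> K"
  shows "(\<Sum>j\<in>{M * p..<K * p}. g (j mod p)) = (real K - real M) * (\<Sum>j<p. g j)"
proof -
  have "(\<Sum>j<K * p. g (j mod p)) = (\<Sum>j<M * p. g (j mod p)) + (\<Sum>j\<in>{M * p..<K * p}. g (j mod p))"
    using assms by (simp add: lessThan_atLeast0 sum.atLeastLessThan_concat)
  then show ?thesis by (simp add: sum_lessThan_mult_mod algebra_simps)
qed

lemma vnorm_nonneg: "0 \<le> vnorm p z"
  by (simp add: vnorm_def sum_nonneg)

lemma vnorm_power2: "(vnorm p z)^2 = (\<Sum>i<p. (cmod (z i))^2)"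
  by (simp add: vnorm_def sum_nonneg)

lemma vnorm_triangle: "vnorm p (\<lambda>i. a i + b i) \<le> vnorm p a + vnorm p b"
proof -
  have "L2_set (\<lambda>i. cmod (a i + b i)) {..<p} \<le> L2_set (\<lambda>i. cmod (a i) + cmod (b i)) {..<p}"
    by (intro L2_set_mono norm_triangle_ineq) auto
  also have "\<dots> \<le> L2_set (\<lambda>i. cmod (a i)) {..<p} + L2_set (\<lambda>i. cmod (b i)) {..<p}"
    by (rule L2_set_triangle_ineq)
  finally show ?thesis by (simp add: vnorm_def L2_set_def)
qed

definition twisted_repeat :: "nat \<Rightarrow> nat \<Rightarrow> complex \<Rightarrow> (nat \<Rightarrow> complex) \<Rightarrow> nat \<Rightarrow> complex" where
  "twisted_repeat p K l u j = (if j < K * p then cnj l ^ j * u (j mod p) else 0)"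

lemma
  assumes "cmod l = 1"
  shows l2_twisted_repeat: "l2 (twisted_repeat p K l u)"
    and l2norm_twisted_repeat: "(l2norm (twisted_repeat p K l u))^2 = real K * (vnorm p u)^2"
proof -
  have zero: "\<And>j. j \<notin> {..<K * p} \<Longrightarrow> twisted_repeat p K l u j = 0"
    by (simp add: twisted_repeat_def)
  show "l2 (twisted_repeat p K l u)" by (rule l2_finite_support(1)[OF finite_lessThan zero])
  have "(\<Sum>j<K * p. (cmod (twisted_repeat p K l u j))^2) = (\<Sum>j<K * p. (cmod (u (j mod p)))^2)"
    using assms by (intro sum.cong) (simp_all add: twisted_repeat_def norm_mult norm_power)
  then show "(l2norm (twisted_repeat p K l u))^2 = real K * (vnorm p u)^2"
    unfolding vnorm_power2 sum_lessThan_mult_mod[symmetric]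
    using l2_finite_support(2)[OF finite_lessThan zero] by (simp add: sum_nonneg)
qed

lemma pi_x_apply:
  "pi_x \<phi> y F w i =
    (\<Sum>n\<in>{n. F n \<noteq> (\<lambda>x. 0)}. if n \<le> i then F n ((\<phi> ^^ (i - n)) y) * w (i - n) else 0)"
  by (simp add: pi_x_def rep_poly_def shift_power orbit_mult_def)

lemma Pi_yl_apply:
  assumes "i < period \<phi> y"
  shows "Pi_yl \<phi> y l F u i = (\<Sum>n\<in>{n. F n \<noteq> (\<lambda>x. 0)}.
     l ^ n * (F n ((\<phi> ^^ ((i + n * (period \<phi> y - 1)) mod period \<phi> y)) y) *
       u ((i + n * (period \<phi> y - 1)) mod period \<phi> y)))"
  by (simp add: Pi_yl_def rep_poly_def cyc_power[OF assms] orbit_mult_def)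

lemma cnj_power_diff:
  assumes "cmod l = 1" "n \<le> i"
  shows "cnj l ^ (i - n) = cnj l ^ i * l ^ n"
proof -
  have "cnj l ^ n * l ^ n = 1"
    using assms(1) complex_norm_square[of l] by (simp add: mult.commute flip: power_mult_distrib)
  then show ?thesis
    using assms(2) by (metis mult.assoc mult.right_neutral le_add_diff_inverse2 power_add)
qed

lemma pi_x_twisted_repeat:
  fixes \<phi> :: "'x \<Rightarrow> 'x"
  assumes per: "periodic_pt \<phi> y" and l: "cmod l = 1"
    and N: "\<And>n. F n \<noteq> (\<lambda>x. 0) \<Longrightarrow> n < N" and i: "N \<le> i" "i < K * period \<phi> y"
  shows "pi_x \<phi> y F (twisted_repeat (period \<phi> y) K l u) i =
    cnj l ^ i * Pi_yl \<phi> y l F u (i mod period \<phi> y)"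
proof -
  define p where "p = period \<phi> y"
  have p0: "0 < p" and pp: "(\<phi> ^^ p) y = y" using period_pos_funpow[OF per] unfolding p_def by auto
  have Pi_i: "Pi_yl \<phi> y l F u (i mod p) = (\<Sum>n\<in>{n. F n \<noteq> (\<lambda>x. 0)}.
     l ^ n * (F n ((\<phi> ^^ ((i mod p + n * (p - 1)) mod p)) y) * u ((i mod p + n * (p - 1)) mod p)))"
    using Pi_yl_apply[of "i mod p" \<phi> y l F u] p0 unfolding p_def by simp
  show ?thesis
    unfolding pi_x_apply p_def[symmetric] Pi_i sum_distrib_left
  proof (rule sum.cong[OF refl])
    fix n assume "n \<in> {n. F n \<noteq> (\<lambda>x. 0)}"
    then have ni: "n \<le> i" using N i by fastforce
    have jm: "(i mod p + n * (p - 1)) mod p = (i - n) mod p"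
    proof -
      have "i + n * (p - 1) = (i - n) + n * p" using ni p0 by (simp add: algebra_simps diff_mult_distrib2)
      then show ?thesis by (metis mod_add_left_eq mod_mult_self1)
    qed
    show "(if n \<le> i then F n ((\<phi> ^^ (i - n)) y) * twisted_repeat p K l u (i - n) else 0) =
      cnj l ^ i * (l ^ n * (F n ((\<phi> ^^ ((i mod p + n * (p - 1)) mod p)) y) * u ((i mod p + n * (p - 1)) mod p)))"
      unfolding jm funpow_mod_period[OF pp, of "i - n"]
      using ni i cnj_power_diff[OF l ni] by (simp add: twisted_repeat_def p_def ac_simps)
  qed
qed

lemma le_of_linear_growth_bound:
  fixes a c :: real
  assumes "\<And>K::nat. M \<le> K \<Longrightarrow> (real K - real M) * a \<le> real K * c"
  shows "a \<le> c"
proof (rule ccontr)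
  assume "\<not> a \<le> c"
  then have gap: "0 < a - c" by simp
  obtain K0 :: nat where K0: "real M * a / (a - c) < real K0"
    using reals_Archimedean2 by blast
  define K where "K = max K0 M"
  have MK: "M \<le> K" and K0K: "real K0 \<le> real K" by (simp_all add: K_def)
  have "real M * a < real K0 * (a - c)" using K0 gap by (simp add: pos_divide_less_eq)
  also have "\<dots> \<le> real K * (a - c)" using K0K gap by (intro mult_right_mono) auto
  finally have "real M * a < real K * (a - c)" .
  moreover have "real K * (a - c) \<le> real M * a" using assms[OF MK] by (simp add: algebra_simps)
  ultimately show False by simp
qed

lemma vnorm_Pi_yl_power2_le_opnorm_pi_x:
  fixes \<phi> :: "'x::topological_space \<Rightarrow> 'x"
  assumes cpt: "compact (UNIV :: 'x set)" and per: "periodic_pt \<phi> y" and l: "cmod l = 1"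
    and F: "is_poly F" and N: "\<And>n. F n \<noteq> (\<lambda>x. 0) \<Longrightarrow> n < N" and NK: "N \<le> K"
  shows "(real K - real N) * (vnorm (period \<phi> y) (Pi_yl \<phi> y l F u))^2 \<le>
    real K * ((opnorm (pi_x \<phi> y F))^2 * (vnorm (period \<phi> y) u)^2)"
proof -
  interpret compact_covariant_rep \<phi> "orbit_mult \<phi> y" shift
    by (rule compact_covariant_rep_orbit_mult_shift[OF cpt])
  define p where "p = period \<phi> y"
  define w where "w = twisted_repeat p K l u"
  have p0: "0 < p" using period_pos_funpow[OF per] unfolding p_def by auto
  have "(real K - real N) * (vnorm p (Pi_yl \<phi> y l F u))^2 =
      (\<Sum>j\<in>{N * p..<K * p}. (cmod (Pi_yl \<phi> y l F u (j mod p)))^2)"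
    unfolding vnorm_power2 by (rule sum_atLeastLessThan_mult_mod[OF NK, symmetric])
  also have "\<dots> = (\<Sum>j\<in>{N * p..<K * p}. (cmod (pi_x \<phi> y F w j))^2)"
  proof (rule sum.cong[OF refl])
    fix j assume j: "j \<in> {N * p..<K * p}"
    have "N \<le> N * p" using p0 by simp
    moreover have "N * p \<le> j" "j < K * p" using j by simp_all
    ultimately have "N \<le> j" "j < K * p" by linarith+
    then have "pi_x \<phi> y F w j = cnj l ^ j * Pi_yl \<phi> y l F u (j mod p)"
      unfolding w_def p_def by (intro pi_x_twisted_repeat[OF per l N]) auto
    then show "(cmod (Pi_yl \<phi> y l F u (j mod p)))^2 = (cmod (pi_x \<phi> y F w j))^2"
      by (simp add: norm_mult norm_power l)
  qed
  also have "\<dots> \<le> (l2norm (pi_x \<phi> y F w))^2"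
    unfolding pi_x_def w_def by (intro sum_le_l2norm_power2 l2_rep_poly F l2_twisted_repeat l) simp
  also have "\<dots> \<le> (opnorm (pi_x \<phi> y F) * l2norm w)^2"
    unfolding pi_x_def w_def
    by (intro power_mono l2norm_rep_poly_le_opnorm_mult F l2_twisted_repeat l) simp
  also have "\<dots> = real K * ((opnorm (pi_x \<phi> y F))^2 * (vnorm p u)^2)"
    unfolding power_mult_distrib w_def l2norm_twisted_repeat[OF l] by simp
  finally show ?thesis unfolding p_def .
qed

lemma vnorm_Pi_yl_le_opnorm_pi_x:
  fixes \<phi> :: "'x::topological_space \<Rightarrow> 'x"
  assumes cpt: "compact (UNIV :: 'x set)" and per: "periodic_pt \<phi> y" and l: "cmod l = 1"
    and F: "is_poly F" and u: "vnorm (period \<phi> y) u \<le> 1"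
  shows "vnorm (period \<phi> y) (Pi_yl \<phi> y l F u) \<le> opnorm (pi_x \<phi> y F)"
proof -
  define c where "c = opnorm (pi_x \<phi> y F)"
  have "finite {n. F n \<noteq> (\<lambda>x. 0)}" using F unfolding is_poly_def by blast
  then obtain N where "\<forall>n\<in>{n. F n \<noteq> (\<lambda>x. 0)}. n < N"
    unfolding finite_nat_set_iff_bounded by blast
  then have N: "\<And>n. F n \<noteq> (\<lambda>x. 0) \<Longrightarrow> n < N" by blast
  have "(vnorm (period \<phi> y) (Pi_yl \<phi> y l F u))^2 \<le> c^2 * (vnorm (period \<phi> y) u)^2"
    unfolding c_def
    by (rule le_of_linear_growth_bound[OF vnorm_Pi_yl_power2_le_opnorm_pi_x[OF cpt per l F N]])
  also have "\<dots> \<le> c^2"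
    using u vnorm_nonneg[of "period \<phi> y" u] by (simp add: mult_left_le power_le_one)
  finally show ?thesis
    unfolding c_def pi_x_def
    by (rule power2_le_imp_le[OF _ compact_covariant_rep.opnorm_rep_poly_nonneg
          [OF compact_covariant_rep_orbit_mult_shift[OF cpt] F]])
qed

section \<open>Passage to the completion\<close>

lemma is_poly_diff:
  assumes "is_poly A" "is_poly B"
  shows "is_poly (\<lambda>n x. A n x - B n x)"
proof -
  have "{n. (\<lambda>x. A n x - B n x) \<noteq> (\<lambda>x. 0)} \<subseteq> {n. A n \<noteq> (\<lambda>x. 0)} \<union> {n. B n \<noteq> (\<lambda>x. 0)}"
    by auto
  then have "finite {n. (\<lambda>x. A n x - B n x) \<noteq> (\<lambda>x. 0)}"
    using assms unfolding is_poly_def by (auto intro: finite_subset)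
  moreover have "continuous_on UNIV (\<lambda>x. A n x - B n x)" for n
    using assms unfolding is_poly_def by (intro continuous_on_diff) auto
  ultimately show ?thesis unfolding is_poly_def by blast
qed

lemma funpow_diff:
  fixes V :: "(nat \<Rightarrow> complex) \<Rightarrow> (nat \<Rightarrow> complex)"
  assumes "\<And>a b. V (\<lambda>i. a i - b i) = (\<lambda>i. V a i - V b i)"
  shows "(V ^^ n) (\<lambda>i. u i - v i) = (\<lambda>i. (V ^^ n) u i - (V ^^ n) v i)"
  by (induction n) (simp_all add: assms)

lemma rep_poly_orbit_mult_eq_sum:
  fixes V :: "(nat \<Rightarrow> complex) \<Rightarrow> (nat \<Rightarrow> complex)"
  assumes V: "\<And>a b. V (\<lambda>i. a i - b i) = (\<lambda>i. V a i - V b i)"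
    and T: "finite T" "{n. fs n \<noteq> (\<lambda>x. 0)} \<subseteq> T"
  shows "rep_poly (orbit_mult \<phi> y) V fs z = (\<lambda>i. \<Sum>n\<in>T. (V ^^ n) (orbit_mult \<phi> y (fs n) z) i)"
proof -
  have "(V ^^ n) (\<lambda>i. 0) = (\<lambda>i. 0)" for n
    using funpow_diff[where V=V and n=n and u="\<lambda>i. 0" and v="\<lambda>i. 0", OF V] by simp
  then have "(V ^^ n) (orbit_mult \<phi> y (fs n) z) i = 0" if "n \<in> T - {n. fs n \<noteq> (\<lambda>x. 0)}" for n i
    using that by (simp add: orbit_mult_def)
  then show ?thesis
    unfolding rep_poly_def by (intro ext sum.mono_neutral_left T) blast
qed

lemma rep_poly_orbit_mult_diff:
  fixes V :: "(nat \<Rightarrow> complex) \<Rightarrow> (nat \<Rightarrow> complex)"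
  assumes V: "\<And>a b. V (\<lambda>i. a i - b i) = (\<lambda>i. V a i - V b i)"
    and A: "is_poly A" and B: "is_poly B"
  shows "rep_poly (orbit_mult \<phi> y) V A z =
    (\<lambda>i. rep_poly (orbit_mult \<phi> y) V B z i + rep_poly (orbit_mult \<phi> y) V (\<lambda>n x. A n x - B n x) z i)"
proof -
  let ?T = "{n. A n \<noteq> (\<lambda>x. 0)} \<union> {n. B n \<noteq> (\<lambda>x. 0)}"
  have T: "finite ?T" using A B unfolding is_poly_def by simp
  have om: "orbit_mult \<phi> y (\<lambda>x. A n x - B n x) z = (\<lambda>i. orbit_mult \<phi> y (A n) z i - orbit_mult \<phi> y (B n) z i)" for n
    by (simp add: orbit_mult_def algebra_simps)
  have "rep_poly (orbit_mult \<phi> y) V fs z = (\<lambda>i. \<Sum>n\<in>?T. (V ^^ n) (orbit_mult \<phi> y (fs n) z) i)"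
    if "fs = A \<or> fs = B \<or> fs = (\<lambda>n x. A n x - B n x)" for fs
    using that by (intro rep_poly_orbit_mult_eq_sum[where V=V, OF V T]) auto
  then show ?thesis
    by (simp add: om funpow_diff[where V=V, OF V] sum_subtractf)
qed

lemma opnorm_pi_x_le:
  fixes \<phi> :: "'x::topological_space \<Rightarrow> 'x"
  assumes cpt: "compact (UNIV :: 'x set)" and A: "is_poly A" and B: "is_poly B"
  shows "opnorm (pi_x \<phi> y A) \<le> opnorm (pi_x \<phi> y B) + opnorm (pi_x \<phi> y (\<lambda>n x. A n x - B n x))"
proof -
  interpret compact_covariant_rep \<phi> "orbit_mult \<phi> y" shift
    by (rule compact_covariant_rep_orbit_mult_shift[OF cpt])
  have D: "is_poly (\<lambda>n x. A n x - B n x)" by (rule is_poly_diff[OF A B])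
  show ?thesis
    unfolding pi_x_def
  proof (intro opnorm_least add_nonneg_nonneg opnorm_rep_poly_nonneg B D)
    fix z :: "nat \<Rightarrow> complex" assume z: "l2 z" "l2norm z \<le> 1"
    have shift_diff: "shift (\<lambda>i. a i - b i) = (\<lambda>i. shift a i - shift b i)" for a b
      by (auto simp: shift_def)
    let ?T = "rep_poly (orbit_mult \<phi> y) shift"
    have "l2norm (?T A z) = l2norm (\<lambda>i. ?T B z i + ?T (\<lambda>n x. A n x - B n x) z i)"
      by (simp only: rep_poly_orbit_mult_diff[where V=shift, OF shift_diff A B])
    also have "\<dots> \<le> l2norm (?T B z) + l2norm (?T (\<lambda>n x. A n x - B n x) z)"
      by (intro l2norm_triangle l2_rep_poly B D z)
    also have "\<dots> \<le> opnorm (?T B) + opnorm (?T (\<lambda>n x. A n x - B n x))"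
      by (intro add_mono l2norm_rep_poly_le_opnorm B D z)
    finally show "l2norm (?T A z) \<le> opnorm (?T B) + opnorm (?T (\<lambda>n x. A n x - B n x))" .
  qed
qed

lemma
  fixes \<phi> :: "'x::topological_space \<Rightarrow> 'x"
  assumes "compact (UNIV :: 'x set)" "periodic_pt \<phi> y" "cmod l = 1" "is_poly F"
  shows matnorm_Pi_yl_le_opnorm_pi_x: "matnorm (period \<phi> y) (Pi_yl \<phi> y l F) \<le> opnorm (pi_x \<phi> y F)"
    and vnorm_le_matnorm_Pi_yl:
      "vnorm (period \<phi> y) u \<le> 1 \<Longrightarrow>
        vnorm (period \<phi> y) (Pi_yl \<phi> y l F u) \<le> matnorm (period \<phi> y) (Pi_yl \<phi> y l F)"
proof -
  let ?S = "{vnorm (period \<phi> y) (Pi_yl \<phi> y l F u) | u. vnorm (period \<phi> y) u \<le> 1}"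
  have "vnorm (period \<phi> y) (\<lambda>i. 0) \<le> 1" by (simp add: vnorm_def)
  then have "?S \<noteq> {}" by blast
  moreover have le: "\<forall>r\<in>?S. r \<le> opnorm (pi_x \<phi> y F)"
    using vnorm_Pi_yl_le_opnorm_pi_x[OF assms] by blast
  ultimately show "matnorm (period \<phi> y) (Pi_yl \<phi> y l F) \<le> opnorm (pi_x \<phi> y F)"
    unfolding matnorm_def by (intro cSup_least) auto
  show "vnorm (period \<phi> y) (Pi_yl \<phi> y l F u) \<le> matnorm (period \<phi> y) (Pi_yl \<phi> y l F)"
    if "vnorm (period \<phi> y) u \<le> 1"
    unfolding matnorm_def using that le by (intro cSup_upper bdd_aboveI[of _ "opnorm (pi_x \<phi> y F)"]) auto
qed

lemma matnorm_Pi_yl_le: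
  fixes \<phi> :: "'x::topological_space \<Rightarrow> 'x"
  assumes cpt: "compact (UNIV :: 'x set)" and per: "periodic_pt \<phi> y" and l: "cmod l = 1"
    and A: "is_poly A" and B: "is_poly B"
  shows "matnorm (period \<phi> y) (Pi_yl \<phi> y l A) \<le>
    matnorm (period \<phi> y) (Pi_yl \<phi> y l B) + matnorm (period \<phi> y) (Pi_yl \<phi> y l (\<lambda>n x. A n x - B n x))"
  unfolding matnorm_def[of _ "Pi_yl \<phi> y l A"]
proof (rule cSup_least)
  have "vnorm (period \<phi> y) (\<lambda>i. 0) \<le> 1" by (simp add: vnorm_def)
  then show "{vnorm (period \<phi> y) (Pi_yl \<phi> y l A u) |u. vnorm (period \<phi> y) u \<le> 1} \<noteq> {}" by blast
next
  fix r assume "r \<in> {vnorm (period \<phi> y) (Pi_yl \<phi> y l A u) |u. vnorm (period \<phi> y) u \<le> 1}"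
  then obtain u where r: "r = vnorm (period \<phi> y) (Pi_yl \<phi> y l A u)" and u: "vnorm (period \<phi> y) u \<le> 1"
    by blast
  have cyc_diff: "cyc (period \<phi> y) l (\<lambda>i. a i - b i) = (\<lambda>i. cyc (period \<phi> y) l a i - cyc (period \<phi> y) l b i)"
    for a b by (auto simp: cyc_def algebra_simps)
  have "r \<le> vnorm (period \<phi> y) (Pi_yl \<phi> y l B u) + vnorm (period \<phi> y) (Pi_yl \<phi> y l (\<lambda>n x. A n x - B n x) u)"
    unfolding r Pi_yl_def rep_poly_orbit_mult_diff[where V="cyc (period \<phi> y) l", OF cyc_diff A B]
    by (rule vnorm_triangle)
  also have "\<dots> \<le> matnorm (period \<phi> y) (Pi_yl \<phi> y l B) + matnorm (period \<phi> y) (Pi_yl \<phi> y l (\<lambda>n x. A n x - B n x))"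
    using vnorm_le_matnorm_Pi_yl[OF cpt per l] is_poly_diff[OF A B] B u by (intro add_mono)
  finally show "r \<le> matnorm (period \<phi> y) (Pi_yl \<phi> y l B) + matnorm (period \<phi> y) (Pi_yl \<phi> y l (\<lambda>n x. A n x - B n x))" .
qed

lemma tendsto_ext_norm:
  assumes P: "in_completion H \<phi> P"
    and N: "\<And>A B. is_poly A \<Longrightarrow> is_poly B \<Longrightarrow> N A \<le> N B + univ_norm H \<phi> (\<lambda>n x. A n x - B n x)"
  shows "(\<lambda>k. N (P k)) \<longlonglongrightarrow> ext_norm N P"
proof -
  have "Cauchy (\<lambda>k. N (P k))"
  proof (rule CauchyI)
    fix \<epsilon> :: real assume "0 < \<epsilon>"
    then obtain M where M: "\<forall>k\<ge>M. \<forall>m\<ge>M. univ_norm H \<phi> (\<lambda>n x. P k n x - P m n x) < \<epsilon>"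
      using P unfolding in_completion_def by blast
    have polys: "is_poly (P k)" for k using P unfolding in_completion_def by blast
    have "\<bar>N (P k) - N (P m)\<bar> < \<epsilon>" if "M \<le> k" "M \<le> m" for k m
      using N[OF polys polys, of k m] N[OF polys polys, of m k]
        M[rule_format, OF that] M[rule_format, OF that(2,1)]
      by (simp add: abs_less_iff)
    then show "\<exists>M. \<forall>k\<ge>M. \<forall>m\<ge>M. norm (N (P k) - N (P m)) < \<epsilon>" by auto
  qed
  then show ?thesis
    unfolding ext_norm_def using Cauchy_convergent_iff convergent_LIMSEQ_iff by blast
qed

lemma opnorm_pi_x_le_univ_norm:
  fixes \<phi> :: "'x::topological_space \<Rightarrow> 'x"
  assumes "compact (UNIV :: 'x set)" "infinite (UNIV :: 'h set)" "is_poly F"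
  shows "opnorm (pi_x \<phi> y F) \<le> univ_norm TYPE('h) \<phi> F"
  unfolding pi_x_def
  by (rule opnorm_le_univ_norm_of_infinite[OF assms(1,3,2) is_rep_orbit_mult_shift[OF assms(1)]])

lemma tendsto_opnorm_pi_x:
  fixes \<phi> :: "'x::topological_space \<Rightarrow> 'x"
  assumes cpt: "compact (UNIV :: 'x set)" and inf: "infinite (UNIV :: 'h set)"
    and P: "in_completion TYPE('h) \<phi> P"
  shows "(\<lambda>k. opnorm (pi_x \<phi> y (P k))) \<longlonglongrightarrow> ext_norm (\<lambda>fs. opnorm (pi_x \<phi> y fs)) P"
proof (rule tendsto_ext_norm[OF P])
  fix A B :: "nat \<Rightarrow> 'x \<Rightarrow> complex" assume "is_poly A" "is_poly B"
  then show "opnorm (pi_x \<phi> y A) \<le> opnorm (pi_x \<phi> y B) + univ_norm TYPE('h) \<phi> (\<lambda>n x. A n x - B n x)"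
    using opnorm_pi_x_le[OF cpt] opnorm_pi_x_le_univ_norm[OF cpt inf is_poly_diff]
    by (meson add_left_mono order_trans)
qed

lemma tendsto_matnorm_Pi_yl:
  fixes \<phi> :: "'x::topological_space \<Rightarrow> 'x"
  assumes cpt: "compact (UNIV :: 'x set)" and inf: "infinite (UNIV :: 'h set)"
    and per: "periodic_pt \<phi> y" and l: "cmod l = 1" and P: "in_completion TYPE('h) \<phi> P"
  shows "(\<lambda>k. matnorm (period \<phi> y) (Pi_yl \<phi> y l (P k))) \<longlonglongrightarrow>
    ext_norm (\<lambda>fs. matnorm (period \<phi> y) (Pi_yl \<phi> y l fs)) P"
proof (rule tendsto_ext_norm[OF P])
  fix A B :: "nat \<Rightarrow> 'x \<Rightarrow> complex" assume AB: "is_poly A" "is_poly B"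
  have "matnorm (period \<phi> y) (Pi_yl \<phi> y l (\<lambda>n x. A n x - B n x)) \<le> univ_norm TYPE('h) \<phi> (\<lambda>n x. A n x - B n x)"
    using matnorm_Pi_yl_le_opnorm_pi_x[OF cpt per l] opnorm_pi_x_le_univ_norm[OF cpt inf] is_poly_diff[OF AB]
    by (meson order_trans)
  then show "matnorm (period \<phi> y) (Pi_yl \<phi> y l A) \<le>
      matnorm (period \<phi> y) (Pi_yl \<phi> y l B) + univ_norm TYPE('h) \<phi> (\<lambda>n x. A n x - B n x)"
    using matnorm_Pi_yl_le[OF cpt per l AB] by linarith
qed

theorem lemma5:
  fixes \<phi> :: "'x::t2_space \<Rightarrow> 'x" and y :: 'x and P :: "nat \<Rightarrow> nat \<Rightarrow> 'x \<Rightarrow> complex"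
  assumes "compact (UNIV :: 'x set)"
    and "\<exists>\<psi>. homeomorphism UNIV UNIV \<phi> \<psi>"
    and "periodic_pt \<phi> y"
    and "infinite (UNIV :: 'h set)"
    and "in_completion TYPE('h) \<phi> P"
  shows "ext_norm (\<lambda>fs. opnorm (pi_x \<phi> y fs)) P \<ge>
         (SUP l\<in>{l::complex. cmod l = 1}. ext_norm (\<lambda>fs. matnorm (period \<phi> y) (Pi_yl \<phi> y l fs)) P)"
proof -
  note cpt = assms(1) and per = assms(3) and inf = assms(4) and P = assms(5)
  have polys: "is_poly (P k)" for k using P unfolding in_completion_def by blast
  have "ext_norm (\<lambda>fs. matnorm (period \<phi> y) (Pi_yl \<phi> y l fs)) P \<le> ext_norm (\<lambda>fs. opnorm (pi_x \<phi> y fs)) P"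
    if l: "cmod l = 1" for l
    using matnorm_Pi_yl_le_opnorm_pi_x[OF cpt per l polys]
    by (intro LIMSEQ_le[OF tendsto_matnorm_Pi_yl[OF cpt inf per l P] tendsto_opnorm_pi_x[OF cpt inf P]])
      blast
  moreover have "{l::complex. cmod l = 1} \<noteq> {}" using norm_one by blast
  ultimately show ?thesis by (intro cSUP_least) auto
qed

end
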